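(* Let $1\le k\le m$, let $l=(l_1,\dots,l_k)$ be integers with $0<l_1<\dots<l_k<m+1$, and let $\nu$ be a permutation of $[k]$. Let $f:[m]\to\mathbb{R}$ be such that the average $\frac{1}{m-l_i+1}\sum_{v=l_i}^{m}f(v)$ is the same for all $i\in[k]$, and define $g:S'_{k,m}\to\mathbb{R}$ by $g(x)=\sum_{i=1}^{k}f(x_i)$. Then $g$ is homomesic for $\underline{W}_\nu$ acting on $S'_{k,m}$.
   Context: $S_{k,m}$: integer $k$-tuples with $0<x_1<\dots<x_k<m+1$. Winching $W_i(x)=y$: $y_j=x_j$ ($j\ne i$), $y_i=x_i+1$ if $x_i+1<x_{i+1}$, else $y_i=x_{i-1}+1$, with $x_0=0$, $x_{k+1}=m+1$. Given lower bounds $l$, $S'_{k,m}=\{x\in S_{k,m}: x_i\ge l_i\ \forall i\}$; winching with lower bounds $\underline{W}_i$ agrees with $W_i$ except that its $i$-th coordinate is $\max\{(W_i(x))_i,\,l_i\}$ (it is a permutation of $S'_{k,m}$). $\underline{W}_\nu=\underline{W}_{\nu(k)}\circ\cdots\circ\underline{W}_{\nu(1)}$. A function on a finite set with a permutation $\tau$ is homomesic if its average over every $\tau$-orbit is the same constant. *)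

theory Defs
  imports Complex_Main "HOL-Combinatorics.Permutations"
begin

text \<open>Tuples x = (x_1,...,x_k) are represented as functions nat => int, with
  the coordinates at indices 1..k and value 0 at all other indices.\<close>

definition bnd :: "nat \<Rightarrow> int \<Rightarrow> (nat \<Rightarrow> int) \<Rightarrow> nat \<Rightarrow> int" where
  "bnd k m x i = (if i = 0 then 0 else if i = k + 1 then m + 1 else x i)"

definition S_set :: "nat \<Rightarrow> int \<Rightarrow> (nat \<Rightarrow> int) set" where
  "S_set k m = {x. (\<forall>i. (i < 1 \<or> k < i) \<longrightarrow> x i = 0) \<and>
                   (\<forall>i\<le>k. bnd k m x i < bnd k m x (i + 1))}"

definition S'_set :: "nat \<Rightarrow> int \<Rightarrow> (nat \<Rightarrow> int) \<Rightarrow> (nat \<Rightarrow> int) set" where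
  "S'_set k m l = {x \<in> S_set k m. \<forall>i\<in>{1..k}. l i \<le> x i}"

definition winch :: "nat \<Rightarrow> int \<Rightarrow> nat \<Rightarrow> (nat \<Rightarrow> int) \<Rightarrow> (nat \<Rightarrow> int)" where
  "winch k m i x = x(i := (if x i + 1 < bnd k m x (i + 1) then x i + 1
                           else bnd k m x (i - 1) + 1))"

definition lwinch :: "nat \<Rightarrow> int \<Rightarrow> (nat \<Rightarrow> int) \<Rightarrow> nat \<Rightarrow> (nat \<Rightarrow> int) \<Rightarrow> (nat \<Rightarrow> int)" where
  "lwinch k m l i x = (winch k m i x)(i := max (winch k m i x i) (l i))"

text \<open>W_nu = W_{nu(k)} o ... o W_{nu(1)} (W_{nu(1)} is applied first).\<close>
definition lwinch_nu :: "nat \<Rightarrow> int \<Rightarrow> (nat \<Rightarrow> int) \<Rightarrow> (nat \<Rightarrow> nat) \<Rightarrow> (nat \<Rightarrow> int) \<Rightarrow> (nat \<Rightarrow> int)" where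
  "lwinch_nu k m l \<nu> x = fold (\<lambda>j y. lwinch k m l (\<nu> j) y) [1..<k+1] x"

definition orb :: "('a \<Rightarrow> 'a) \<Rightarrow> 'a \<Rightarrow> 'a set" where
  "orb \<tau> x = {(\<tau> ^^ n) x | n. True}"

definition homomesic :: "'a set \<Rightarrow> ('a \<Rightarrow> 'a) \<Rightarrow> ('a \<Rightarrow> real) \<Rightarrow> bool" where
  "homomesic X \<tau> h \<longleftrightarrow>
     (\<exists>c. \<forall>x\<in>X. (\<Sum>y\<in>orb \<tau> x. h y) / real (card (orb \<tau> x)) = c)"

end

theory Submission
  imports Defs "HOL-Combinatorics.Orbits"
begin

(* Fix c, the common average of f over the tails {l_i..m}, and the potential
   F(v) = sum_{u=v..m} (f u - c), so that f v - c = F v - F (v+1) and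
   F (l_i) = F (m+1) = 0.  Along one sweep of the composed map, coordinate i
   either moves up by one, contributing F(x_i) - F(x_i+1), or (when blocked by
   its upper neighbour) wraps around below, onto max(lower neighbour + 1, l_i).
   Summed over a whole orbit, f(x_i) - c telescopes to
   (sum of "entry" values at wrap landing points) - (sum of "exit" values at
   blocking points).  The exit events of coordinate i are matched one-to-one
   with the entry events of coordinate i+1 (at the same or the next time step,
   depending on whether nu applies W_i or W_{i+1} first), the entries of
   coordinate 1 and the exits of coordinate k are worthless, so the orbit sum
   of g - k*c vanishes. *)

lemma mem_S'_iff: "x \<in> S'_set k m l \<longleftrightarrow>
   (\<forall>i. (i < 1 \<or> k < i) \<longrightarrow> x i = 0) \<and> (\<forall>i\<le>k. bnd k m x i < bnd k m x (i + 1)) \<and>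
   (\<forall>i\<in>{1..k}. l i \<le> x i)"
  by (auto simp: S'_set_def S_set_def)

lemma bnd_inner: "1 \<le> i \<Longrightarrow> i \<le> k \<Longrightarrow> bnd k m x i = x i"
  by (simp add: bnd_def)

lemma S'_bnd_strict: "x \<in> S'_set k m l \<Longrightarrow> j \<le> k \<Longrightarrow> bnd k m x j < bnd k m x (j + 1)"
  unfolding mem_S'_iff by blast

lemma S'_strict: "x \<in> S'_set k m l \<Longrightarrow> 1 \<le> i \<Longrightarrow> i < k \<Longrightarrow> x i < x (i + 1)"
  using S'_bnd_strict[of x k m l i] bnd_inner[of i k] bnd_inner[of "i + 1" k] by simp

lemma S'_mono:
  assumes x: "x \<in> S'_set k m l" and "1 \<le> i" and "i \<le> j" and "j \<le> k"
  shows "x i \<le> x j"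
  using assms(3,4)
proof (induction j rule: dec_induct)
  case (step j) then show ?case using S'_strict[OF x, of j] \<open>1 \<le> i\<close> by force
qed simp

lemma S'_le_m:
  assumes x: "x \<in> S'_set k m l" and i: "1 \<le> i" "i \<le> k"
  shows "x i \<le> m"
proof -
  have "x k < m + 1" using S'_bnd_strict[OF x, of k] i by (simp add: bnd_def)
  then show ?thesis using S'_mono[OF x i(1) i(2) order_refl] by simp
qed

lemma S'_lower: "x \<in> S'_set k m l \<Longrightarrow> 1 \<le> i \<Longrightarrow> i \<le> k \<Longrightarrow> l i \<le> x i"
  unfolding mem_S'_iff by auto

text \<open>\<open>S'\<close> is finite: its elements are determined by \<open>k\<close> values in \<open>{0..m}\<close>.\<close>
lemma finite_S': "finite (S'_set k m l)"
proof -
  let ?h = "\<lambda>xs i. if 1 \<le> i \<and> i \<le> k then xs ! (i - 1) else (0::int)"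
  have "S'_set k m l \<subseteq> ?h ` {xs. set xs \<subseteq> {0..m} \<and> length xs = k}"
  proof
    fix x assume x: "x \<in> S'_set k m l"
    have pos: "0 < x 1" if "1 \<le> k"
      using S'_bnd_strict[OF x, of 0] that by (simp add: bnd_def)
    have zero: "x i = 0" if "\<not> (1 \<le> i \<and> i \<le> k)" for i
      using x that unfolding mem_S'_iff by (meson not_le)
    have "0 \<le> x i \<and> x i \<le> m" if "1 \<le> i" "i \<le> k" for i
      using S'_mono[OF x, of 1 i] S'_le_m[OF x that] pos that by simp
    then have "set (map (\<lambda>j. x (j + 1)) [0..<k]) \<subseteq> {0..m}" by auto
    moreover have "x = ?h (map (\<lambda>j. x (j + 1)) [0..<k])"
      using zero by (auto intro!: ext)
    ultimately show "x \<in> ?h ` {xs. set xs \<subseteq> {0..m} \<and> length xs = k}" by force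
  qed
  moreover have "finite {xs. set xs \<subseteq> {0..m} \<and> length xs = k}"
    by (rule finite_lists_length_eq) simp
  ultimately show ?thesis by (meson finite_imageI finite_subset)
qed

lemma lwinch_other: "j \<noteq> i \<Longrightarrow> lwinch k m l i x j = x j"
  by (simp add: lwinch_def winch_def)

lemma lwinch_same: "lwinch k m l i x i =
   max (if x i + 1 < bnd k m x (i + 1) then x i + 1 else bnd k m x (i - 1) + 1) (l i)"
  by (simp add: lwinch_def winch_def)

lemma S'_between:
  assumes x: "x \<in> S'_set k m l" and i: "1 \<le> i" "i \<le> k"
  shows "bnd k m x (i - 1) < x i" and "x i < bnd k m x (i + 1)"
  using S'_bnd_strict[OF x, of "i - 1"] S'_bnd_strict[OF x, of i] bnd_inner[OF i] i by simp_all

text \<open>\<open>W_i\<close> with lower bounds maps \<open>S'\<close> into itself \<dots>\<close>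
lemma lwinch_in:
  assumes x: "x \<in> S'_set k m l" and i: "1 \<le> i" "i \<le> k"
  shows "lwinch k m l i x \<in> S'_set k m l"
proof -
  define y where "y = lwinch k m l i x"
  have other: "y j = x j" if "j \<noteq> i" for j using that by (simp add: y_def lwinch_other)
  have bnd_other: "bnd k m y j = bnd k m x j" if "j \<noteq> i" for j
    using other[OF that] that by (simp add: bnd_def)
  have bnd_i: "bnd k m y i = y i" using i by (simp add: bnd_def)
  have low: "bnd k m x (i - 1) < y i" and high: "y i < bnd k m x (i + 1)"
    using S'_between[OF x i] S'_lower[OF x i]
    by (auto simp: y_def lwinch_same)
  have "bnd k m y j < bnd k m y (j + 1)" if "j \<le> k" for j
  proof -
    consider "j = i" | "j + 1 = i" | "j \<noteq> i" "j + 1 \<noteq> i" by blast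
    then show ?thesis
    proof cases
      case 1 then show ?thesis using bnd_other[of "i + 1"] bnd_i high by simp
    next
      case 2 then show ?thesis using bnd_other[of "i - 1"] bnd_i low by auto
    next
      case 3 then show ?thesis
        using bnd_other[of j] bnd_other[of "j + 1"] S'_bnd_strict[OF x that] by simp
    qed
  qed
  moreover have "l j \<le> y j" if "j \<in> {1..k}" for j
    using x that other[of j] unfolding mem_S'_iff by (cases "j = i") (auto simp: y_def lwinch_same)
  moreover have "y j = 0" if "j < 1 \<or> k < j" for j using x that other[of j] i unfolding mem_S'_iff by auto
  ultimately show ?thesis unfolding mem_S'_iff y_def by blast
qed

text \<open>\<dots> injectively: the new value of \<open>x_i\<close> and the unchanged neighbours determine
  the old value, because an advanced coordinate stays above \<open>l i\<close> while a wrapped one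
  lands strictly below the blocking neighbour.\<close>
lemma lwinch_inj:
  assumes x: "x \<in> S'_set k m l" and x': "x' \<in> S'_set k m l" and i: "1 \<le> i" "i \<le> k"
    and eq: "lwinch k m l i x = lwinch k m l i x'"
  shows "x = x'"
proof -
  have other: "x j = x' j" if "j \<noteq> i" for j using eq lwinch_other that by metis
  have "bnd k m x (i + 1) = bnd k m x' (i + 1)" "bnd k m x (i - 1) = bnd k m x' (i - 1)"
    using other i by (auto simp: bnd_def)
  moreover have "lwinch k m l i x i = lwinch k m l i x' i" using eq by simp
  ultimately have "x i = x' i"
    using S'_between[OF x i] S'_between[OF x' i] S'_lower[OF x i] S'_lower[OF x' i]
    unfolding lwinch_same by (auto simp: max_def split: if_splits)
  with other show ?thesis by (metis ext)
qed

section \<open>Orbits of an injective self-map of a finite set\<close>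

lemma funpow_closed: "\<tau> ` A \<subseteq> A \<Longrightarrow> y \<in> A \<Longrightarrow> (\<tau> ^^ n) y \<in> A"
  by (induction n) auto

text \<open>Such a map permutes the set, so every orbit is a cycle \<open>x, \<tau> x, \<dots>, (\<tau>^^(L-1)) x\<close>.\<close>
lemma orbit_as_cycle:
  assumes fin: "finite A" and closed: "\<tau> ` A \<subseteq> A" and inj: "inj_on \<tau> A" and x: "x \<in> A"
  obtains L where "0 < L" "(\<tau> ^^ L) x = x" "inj_on (\<lambda>t. (\<tau> ^^ t) x) {..<L}"
    "orb \<tau> x = (\<lambda>t. (\<tau> ^^ t) x) ` {..<L}"
proof -
  define p where "p y = (if y \<in> A then \<tau> y else y)" for y
  have "bij_betw \<tau> A A"
    using endo_inj_surj[OF fin closed inj] inj by (simp add: bij_betw_def)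
  then have "bij_betw p A A" by (rule bij_betw_cong[THEN iffD1, rotated]) (simp add: p_def)
  then have "p permutes A" by (rule bij_imp_permutes) (simp add: p_def)
  then obtain n where n: "0 < n" "(p ^^ n) x = x"
    using permutation_self permutes_imp_permutation[OF fin] by metis
  have "(p ^^ j) x = (\<tau> ^^ j) x" for j
    by (induction j) (use funpow_closed[OF closed x] in \<open>auto simp: p_def\<close>)
  with n have self: "x \<in> orbit \<tau> x"
    unfolding orbit_altdef by (metis (mono_tags, lifting) mem_Collect_eq)
  define L where "L = funpow_dist1 \<tau> x x"
  show thesis
  proof
    show "0 < L" "(\<tau> ^^ L) x = x" using funpow_dist1_prop[OF self] by (simp_all add: L_def)
    show "inj_on (\<lambda>t. (\<tau> ^^ t) x) {..<L}"
      using inj_on_funpow_dist1[OF self] by (simp add: L_def lessThan_atLeast0)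
    show "orb \<tau> x = (\<lambda>t. (\<tau> ^^ t) x) ` {..<L}"
      using orbit_altdef_self_in[OF self] orbit_conv_funpow_dist1[OF self]
      by (simp add: orb_def L_def lessThan_atLeast0)
  qed
qed

lemma sum_shift_periodic:
  fixes g :: "nat \<Rightarrow> 'a::cancel_comm_monoid_add"
  shows "g L = g 0 \<Longrightarrow> (\<Sum>t<L. g (Suc t)) = (\<Sum>t<L. g t)"
  using sum.lessThan_Suc_shift[of g L] sum.lessThan_Suc[of g L] by (simp add: add.commute)

lemma sum_shifted_match:
  fixes a b :: "nat \<Rightarrow> 'a::comm_monoid_add"
  assumes k: "1 \<le> k" and "a 1 = 0" and "b k = 0" and "\<And>i. 1 \<le> i \<Longrightarrow> i < k \<Longrightarrow> b i = a (Suc i)"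
  shows "(\<Sum>i=1..k. a i) = (\<Sum>i=1..k. b i)"
proof -
  have "(\<Sum>i=1..k. b i) = (\<Sum>i=1..<k. b i) + b k"
    using k by (simp add: atLeastLessThanSuc_atLeastAtMost[symmetric] sum.atLeastLessThan_Suc)
  also have "\<dots> = (\<Sum>i=1..<k. a (Suc i))" using assms by (auto intro!: sum.cong)
  also have "\<dots> = (\<Sum>i=Suc 1..k. a i)"
    by (simp only: sum.shift_bounds_Suc_ivl[symmetric] atLeastLessThanSuc_atLeastAtMost)
  also have "\<dots> = (\<Sum>i=1..k. a i)" using sum.atLeast_Suc_atMost[OF k, of a] assms by simp
  finally show ?thesis by simp
qed

section \<open>The composed map \<open>W_\<nu>\<close>\<close>

text \<open>\<open>sweep j\<close> applies the first \<open>j\<close> winches \<open>W_\<nu>(1), \<dots>, W_\<nu>(j)\<close>; coordinate \<open>i\<close>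
  is moved exactly at step \<open>inv \<nu> i\<close> of the sweep.\<close>
definition sweep :: "nat \<Rightarrow> int \<Rightarrow> (nat \<Rightarrow> int) \<Rightarrow> (nat \<Rightarrow> nat) \<Rightarrow> nat \<Rightarrow> (nat \<Rightarrow> int) \<Rightarrow> (nat \<Rightarrow> int)"
  where "sweep k m l \<nu> j x = fold (\<lambda>j y. lwinch k m l (\<nu> j) y) [1..<j+1] x"

lemma sweep_0 [simp]: "sweep k m l \<nu> 0 x = x"
  by (simp add: sweep_def)

lemma sweep_Suc: "sweep k m l \<nu> (Suc j) x = lwinch k m l (\<nu> (Suc j)) (sweep k m l \<nu> j x)"
  by (simp add: sweep_def)

lemma lwinch_nu_sweep: "lwinch_nu k m l \<nu> x = sweep k m l \<nu> k x"
  by (simp add: sweep_def lwinch_nu_def)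

locale winching_sweep =
  fixes k :: nat and m :: int and l :: "nat \<Rightarrow> int" and \<nu> :: "nat \<Rightarrow> nat"
  assumes perm: "\<nu> permutes {1..k}"
begin

abbreviation "S' \<equiv> S'_set k m l"
abbreviation "\<tau> \<equiv> lwinch_nu k m l \<nu>"

lemma nu_in: "j \<in> {1..k} \<Longrightarrow> \<nu> j \<in> {1..k}"
  using permutes_in_image[OF perm] by blast

lemma inv_nu_in: "j \<in> {1..k} \<Longrightarrow> inv \<nu> j \<in> {1..k}"
  using permutes_in_image[OF permutes_inv[OF perm]] by blast

lemma nu_inv_nu: "\<nu> (inv \<nu> i) = i"
  using permutes_inverses(1)[OF perm] by simp

lemma inv_nu_nu: "inv \<nu> (\<nu> i) = i"
  using permutes_inverses(2)[OF perm] by simp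

lemma sweep_in: "x \<in> S' \<Longrightarrow> j \<le> k \<Longrightarrow> sweep k m l \<nu> j x \<in> S'"
proof (induction j)
  case (Suc j) then show ?case using nu_in[of "Suc j"] lwinch_in by (simp add: sweep_Suc)
qed simp

lemma sweep_inj: "x \<in> S' \<Longrightarrow> x' \<in> S' \<Longrightarrow> j \<le> k \<Longrightarrow> sweep k m l \<nu> j x = sweep k m l \<nu> j x' \<Longrightarrow> x = x'"
proof (induction j)
  case (Suc j)
  then have "sweep k m l \<nu> j x = sweep k m l \<nu> j x'"
    using nu_in[of "Suc j"] sweep_in
      lwinch_inj[of "sweep k m l \<nu> j x" k m l "sweep k m l \<nu> j x'" "\<nu> (Suc j)"]
    by (simp add: sweep_Suc)
  then show ?case using Suc by simp
qed simp

lemma sweep_before: "inv \<nu> i \<notin> {1..j} \<Longrightarrow> sweep k m l \<nu> j x i = x i"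
proof (induction j)
  case (Suc j)
  have "\<nu> (Suc j) \<noteq> i" using Suc.prems inv_nu_nu by force
  moreover have "inv \<nu> i \<notin> {1..j}" using Suc.prems by auto
  ultimately show ?case using Suc.IH by (simp add: sweep_Suc lwinch_other)
qed simp

lemma sweep_after: "inv \<nu> i \<le> j \<Longrightarrow> sweep k m l \<nu> j x i = sweep k m l \<nu> (inv \<nu> i) x i"
proof (induction j rule: dec_induct)
  case (step j)
  then have "\<nu> (Suc j) \<noteq> i" using inv_nu_nu by force
  with step show ?case by (simp add: sweep_Suc lwinch_other)
qed simp

lemma sweep_coord: "j \<le> k \<Longrightarrow>
   sweep k m l \<nu> j x i = (if inv \<nu> i \<in> {1..j} then \<tau> x i else x i)"
  using sweep_before sweep_after[of i j] sweep_after[of i k] by (auto simp: lwinch_nu_sweep)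

lemma tau_maps_to: "\<tau> ` S' \<subseteq> S'"
  using sweep_in[of _ k] by (auto simp: lwinch_nu_sweep)

lemma tau_inj: "inj_on \<tau> S'"
  using sweep_inj[of _ _ k] by (auto simp: lwinch_nu_sweep intro: inj_onI)

text \<open>The neighbours seen by \<open>W_i\<close> during the sweep: the lower one (\<open>0\<close> for \<open>i = 1\<close>)
  and the upper one (\<open>m + 1\<close> for \<open>i = k\<close>), each already moved iff its winch comes first.\<close>
definition lower_nbr :: "(nat \<Rightarrow> int) \<Rightarrow> nat \<Rightarrow> int" where
  "lower_nbr y i = (if i = 1 then 0 else if inv \<nu> (i - 1) < inv \<nu> i then \<tau> y (i - 1) else y (i - 1))"

definition upper_nbr :: "(nat \<Rightarrow> int) \<Rightarrow> nat \<Rightarrow> int" where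
  "upper_nbr y i = (if i = k then m + 1 else if inv \<nu> (i + 1) < inv \<nu> i then \<tau> y (i + 1) else y (i + 1))"

lemma tau_coord:
  assumes y: "y \<in> S'" and i: "1 \<le> i" "i \<le> k"
  shows "\<tau> y i = max (if y i + 1 < upper_nbr y i then y i + 1 else lower_nbr y i + 1) (l i)"
proof -
  have j: "inv \<nu> i \<in> {1..k}" using inv_nu_in i by auto
  then obtain j where j_def: "inv \<nu> i = Suc j" by (cases "inv \<nu> i") auto
  define z where "z = sweep k m l \<nu> j y"
  have "\<tau> y i = sweep k m l \<nu> (inv \<nu> i) y i" using sweep_coord[of "inv \<nu> i" y i] j by auto
  also have "\<dots> = lwinch k m l i z i"
    using nu_inv_nu[of i] by (simp add: j_def sweep_Suc z_def)
  finally have tau_i: "\<tau> y i = lwinch k m l i z i" .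
  have "z i = y i" unfolding z_def by (rule sweep_before) (simp add: j_def)
  moreover have "bnd k m z (i + 1) = upper_nbr y i"
  proof (cases "i = k")
    case False
    then have "inv \<nu> (i + 1) \<in> {1..k}" using i by (intro inv_nu_in) auto
    then show ?thesis using False sweep_coord[of j y "i + 1"] j j_def
      by (auto simp: bnd_def upper_nbr_def z_def)
  qed (simp add: bnd_def upper_nbr_def)
  moreover have "bnd k m z (i - 1) = lower_nbr y i"
  proof (cases "i = 1")
    case False
    then have "inv \<nu> (i - 1) \<in> {1..k}" using i by (intro inv_nu_in) auto
    then show ?thesis using False sweep_coord[of j y "i - 1"] j j_def i
      by (auto simp: bnd_def lower_nbr_def z_def)
  qed (simp add: bnd_def lower_nbr_def)
  ultimately show ?thesis using tau_i by (simp add: lwinch_same)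
qed

text \<open>The lower neighbour seen by \<open>W_(i+1)\<close> lies below coordinate \<open>i+1\<close> both before and
  after its move, since both configurations occur within the sweep.\<close>
lemma lower_nbr_less:
  assumes y: "y \<in> S'" and i: "1 \<le> i" "i < k"
  shows "lower_nbr y (i + 1) < y (i + 1)" and "lower_nbr y (i + 1) < \<tau> y (i + 1)"
proof -
  have inv_in: "inv \<nu> (i + 1) \<in> {1..k}" "inv \<nu> i \<in> {1..k}" using inv_nu_in i by auto
  have ne: "inv \<nu> i \<noteq> inv \<nu> (i + 1)" using nu_inv_nu by (metis n_not_Suc_n Suc_eq_plus1)
  have lower: "lower_nbr y (i + 1) = (if inv \<nu> i < inv \<nu> (i + 1) then \<tau> y i else y i)"
    using i by (simp add: lower_nbr_def)
  define z where "z = sweep k m l \<nu> (inv \<nu> (i + 1) - 1) y"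
  have "z i = lower_nbr y (i + 1)" "z (i + 1) = y (i + 1)"
    using sweep_coord[of "inv \<nu> (i + 1) - 1" y i] sweep_coord[of "inv \<nu> (i + 1) - 1" y "i + 1"]
      inv_in lower unfolding z_def by auto
  then show "lower_nbr y (i + 1) < y (i + 1)"
    using S'_strict[OF sweep_in[OF y] i] inv_in unfolding z_def by (metis diff_le_self atLeastAtMost_iff le_trans)
  define z' where "z' = sweep k m l \<nu> (inv \<nu> (i + 1)) y"
  have "z' i = lower_nbr y (i + 1)" "z' (i + 1) = \<tau> y (i + 1)"
    using sweep_coord[of "inv \<nu> (i + 1)" y i] sweep_coord[of "inv \<nu> (i + 1)" y "i + 1"]
      inv_in lower ne unfolding z'_def by auto
  then show "lower_nbr y (i + 1) < \<tau> y (i + 1)"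
    using S'_strict[OF sweep_in[OF y] i] inv_in unfolding z'_def by (metis atLeastAtMost_iff)
qed

end

section \<open>Potential bookkeeping along an orbit\<close>

locale winching_homomesy = winching_sweep +
  fixes f :: "int \<Rightarrow> real" and c :: real
  assumes k_pos: "1 \<le> k"
    and l_pos: "0 < l 1" and l_strict: "\<And>i. 1 \<le> i \<Longrightarrow> i < k \<Longrightarrow> l i < l (i + 1)" and l_top: "l k < m + 1"
    and tail_avg: "\<forall>i\<in>{1..k}. (\<Sum>v\<in>{l i..m}. f v) / real_of_int (m - l i + 1) = c"
begin

definition potential :: "int \<Rightarrow> real" where
  "potential v = (\<Sum>u\<in>{v..m}. f u - c)"

lemma l_mono:
  assumes "1 \<le> i" and "i \<le> j" and "j \<le> k"
  shows "l i \<le> l j"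
  using assms(2,3)
proof (induction j rule: dec_induct)
  case (step j) then show ?case using l_strict[of j] assms(1) by force
qed simp

text \<open>The potential vanishes at every lower bound (this is the averaging hypothesis)
  and above \<open>m\<close>, and its differences recover \<open>f - c\<close>.\<close>
lemma potential_lower_bound: "i \<in> {1..k} \<Longrightarrow> potential (l i) = 0"
proof -
  assume i: "i \<in> {1..k}"
  then have pos: "0 < m - l i + 1" using l_mono[of i k] l_top by auto
  have "(\<Sum>v\<in>{l i..m}. f v) = c * real_of_int (m - l i + 1)"
    using tail_avg i pos by (simp add: divide_eq_eq mult.commute)
  moreover have "real (card {l i..m}) = real_of_int (m - l i + 1)" using pos by simp
  ultimately show ?thesis unfolding potential_def by (simp add: sum_subtractf)
qed

lemma potential_top: "potential (m + 1) = 0"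
  by (simp add: potential_def)

lemma potential_diff: "v \<le> m \<Longrightarrow> f v - c = potential v - potential (v + 1)"
proof -
  assume "v \<le> m"
  then have "{v..m} = insert v {v + 1..m}" by auto
  then show ?thesis unfolding potential_def by simp
qed

text \<open>When coordinate \<open>i\<close> is blocked (\<open>y i + 1\<close> reaches its upper neighbour) it wraps:
  \<open>exit_val\<close> is the potential at the blocking point, \<open>entry_val\<close> at the landing point.\<close>
definition blocked :: "(nat \<Rightarrow> int) \<Rightarrow> nat \<Rightarrow> bool" where
  "blocked y i \<longleftrightarrow> \<not> y i + 1 < upper_nbr y i"

definition exit_val :: "(nat \<Rightarrow> int) \<Rightarrow> nat \<Rightarrow> real" where
  "exit_val y i = (if blocked y i then potential (y i + 1) else 0)"

definition entry_val :: "(nat \<Rightarrow> int) \<Rightarrow> nat \<Rightarrow> real" where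
  "entry_val y i = (if blocked y i then potential (max (lower_nbr y i + 1) (l i)) else 0)"

text \<open>One sweep changes the potential of coordinate \<open>i\<close> (measured against the
  advanced position \<open>y i + 1\<close>) by entry minus exit value.\<close>
lemma potential_change:
  assumes "y \<in> S'" and "1 \<le> i" and "i \<le> k"
  shows "potential (\<tau> y i) - potential (y i + 1) = entry_val y i - exit_val y i"
  using tau_coord[OF assms] S'_lower[OF assms]
  by (auto simp: entry_val_def exit_val_def blocked_def max_def)

text \<open>Coordinate 1 always lands on \<open>l 1\<close>, and coordinate \<open>k\<close> is blocked only at \<open>m + 1\<close>.\<close>
lemma entry_val_first: "entry_val y 1 = 0"
  using potential_lower_bound[of 1] k_pos l_pos by (simp add: entry_val_def lower_nbr_def)

lemma exit_val_last: "y \<in> S' \<Longrightarrow> exit_val y k = 0"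
  using S'_le_m[of y k m l k] k_pos potential_top
  by (cases "y k = m") (auto simp: exit_val_def blocked_def upper_nbr_def)

text \<open>The entry value of coordinate \<open>i+1\<close> can be read off from whether it ends up right
  above the neighbour it saw; landing on \<open>l (i+1)\<close> instead is harmless since \<open>F\<close> vanishes there.\<close>
lemma entry_val_adjacent:
  assumes y: "y \<in> S'" and i: "1 \<le> i" "i < k"
  shows "entry_val y (i + 1) =
    (if lower_nbr y (i + 1) + 1 < \<tau> y (i + 1) then 0 else potential (lower_nbr y (i + 1) + 1))"
proof -
  have "potential (l (i + 1)) = 0" using potential_lower_bound i by simp
  then show ?thesis
    using tau_coord[OF y, of "i + 1"] lower_nbr_less[OF y i] i
    by (auto simp: entry_val_def blocked_def max_def)
qed

lemma exit_entry_pairing: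
  assumes y: "y \<in> S'" and i: "1 \<le> i" "i < k"
  shows "if inv \<nu> (i + 1) < inv \<nu> i then exit_val y i = entry_val y (i + 1)
         else exit_val (\<tau> y) i = entry_val y (i + 1)"
proof (cases "inv \<nu> (i + 1) < inv \<nu> i")
  case True
  then have "lower_nbr y (i + 1) = y i" and "upper_nbr y i = \<tau> y (i + 1)"
    using i by (simp_all add: lower_nbr_def upper_nbr_def)
  with True entry_val_adjacent[OF y i] show ?thesis by (simp add: exit_val_def blocked_def)
next
  case False
  have "inv \<nu> i \<noteq> inv \<nu> (i + 1)" using nu_inv_nu by (metis n_not_Suc_n Suc_eq_plus1)
  with False have "lower_nbr y (i + 1) = \<tau> y i" and "upper_nbr (\<tau> y) i = \<tau> y (i + 1)"
    using i by (simp_all add: lower_nbr_def upper_nbr_def)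
  with False entry_val_adjacent[OF y i] show ?thesis by (simp add: exit_val_def blocked_def)
qed

context
  fixes x :: "nat \<Rightarrow> int" and L :: nat
  assumes x: "x \<in> S'" and period: "(\<tau> ^^ L) x = x"
begin

lemma orbit_in: "(\<tau> ^^ t) x \<in> S'"
  using tau_maps_to x by (rule funpow_closed)

lemma exit_entry_sum:
  assumes i: "1 \<le> i" "i < k"
  shows "(\<Sum>t<L. exit_val ((\<tau> ^^ t) x) i) = (\<Sum>t<L. entry_val ((\<tau> ^^ t) x) (Suc i))"
proof (cases "inv \<nu> (i + 1) < inv \<nu> i")
  case True
  then show ?thesis using exit_entry_pairing[OF orbit_in i] by simp
next
  case False
  have "(\<Sum>t<L. exit_val ((\<tau> ^^ t) x) i) = (\<Sum>t<L. exit_val ((\<tau> ^^ Suc t) x) i)"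
    by (rule sum_shift_periodic[symmetric]) (simp add: period)
  also have "\<dots> = (\<Sum>t<L. entry_val ((\<tau> ^^ t) x) (Suc i))"
    using exit_entry_pairing[OF orbit_in i] False by simp
  finally show ?thesis .
qed

lemma orbit_excess_zero: "(\<Sum>t<L. \<Sum>i=1..k. f ((\<tau> ^^ t) x i) - c) = 0"
proof -
  let ?X = "\<lambda>t. (\<tau> ^^ t) x"
  let ?E = "\<lambda>i. \<Sum>t<L. entry_val (?X t) i" and ?B = "\<lambda>i. \<Sum>t<L. exit_val (?X t) i"
  have per_coord: "(\<Sum>t<L. f (?X t i) - c) = ?E i - ?B i" if i: "1 \<le> i" "i \<le> k" for i
  proof -
    have shift: "(\<Sum>t<L. potential (?X (Suc t) i)) = (\<Sum>t<L. potential (?X t i))"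
      by (rule sum_shift_periodic) (simp add: period)
    have "(\<Sum>t<L. f (?X t i) - c) = (\<Sum>t<L. potential (?X t i) - potential (?X t i + 1))"
      using potential_diff[OF S'_le_m[OF orbit_in i]] by (rule sum.cong[OF refl])
    also have "\<dots> = (\<Sum>t<L. potential (?X (Suc t) i) - potential (?X t i + 1))"
      by (simp only: sum_subtractf shift)
    also have "\<dots> = (\<Sum>t<L. entry_val (?X t) i - exit_val (?X t) i)"
      using potential_change[OF orbit_in i] by (simp only: funpow.simps(2) comp_apply)
    finally show ?thesis by (simp only: sum_subtractf)
  qed
  have "(\<Sum>t<L. \<Sum>i=1..k. f (?X t i) - c) = (\<Sum>i=1..k. \<Sum>t<L. f (?X t i) - c)"
    by (rule sum.swap)
  also have "\<dots> = (\<Sum>i=1..k. ?E i - ?B i)"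
    using per_coord by (intro sum.cong) auto
  also have "\<dots> = (\<Sum>i=1..k. ?E i) - (\<Sum>i=1..k. ?B i)"
    by (rule sum_subtractf)
  also have "(\<Sum>i=1..k. ?E i) = (\<Sum>i=1..k. ?B i)"
  proof (rule sum_shifted_match[OF k_pos])
    show "?E 1 = 0" by (simp only: entry_val_first sum.neutral_const)
    show "?B k = 0" using exit_val_last[OF orbit_in] by simp
    show "?B i = ?E (Suc i)" if "1 \<le> i" "i < k" for i using exit_entry_sum[OF that] .
  qed
  finally show ?thesis by simp
qed

end

lemma orbit_average:
  assumes x: "x \<in> S'"
  shows "(\<Sum>y\<in>orb \<tau> x. \<Sum>i=1..k. f (y i)) / real (card (orb \<tau> x)) = real k * c"
proof -
  obtain L where L: "0 < L" "(\<tau> ^^ L) x = x" "inj_on (\<lambda>t. (\<tau> ^^ t) x) {..<L}"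
    "orb \<tau> x = (\<lambda>t. (\<tau> ^^ t) x) ` {..<L}"
    using orbit_as_cycle[OF finite_S' tau_maps_to tau_inj x] by blast
  have "(\<Sum>y\<in>orb \<tau> x. \<Sum>i=1..k. f (y i)) = (\<Sum>t<L. \<Sum>i=1..k. f ((\<tau> ^^ t) x i))"
    unfolding L(4) by (simp add: sum.reindex[OF L(3)])
  also have "\<dots> = (\<Sum>t<L. (\<Sum>i=1..k. f ((\<tau> ^^ t) x i) - c) + real k * c)"
    by (simp add: sum_subtractf)
  also have "\<dots> = real L * (real k * c)"
    using orbit_excess_zero[OF x L(2)] by (simp add: sum.distrib)
  finally show ?thesis using L(1,3,4) by (simp add: card_image)
qed

end

theorem mainTheorem7:
  fixes k :: nat and m :: int and l :: "nat \<Rightarrow> int" and \<nu> :: "nat \<Rightarrow> nat"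
    and f :: "int \<Rightarrow> real"
  assumes "1 \<le> k" and "int k \<le> m"
    and "0 < l 1" and "\<And>i. 1 \<le> i \<Longrightarrow> i < k \<Longrightarrow> l i < l (i + 1)" and "l k < m + 1"
    and "\<nu> permutes {1..k}"
    and "\<exists>c. \<forall>i\<in>{1..k}. (\<Sum>v\<in>{l i..m}. f v) / real_of_int (m - l i + 1) = c"
  shows "homomesic (S'_set k m l) (lwinch_nu k m l \<nu>) (\<lambda>x. \<Sum>i=1..k. f (x i))"
proof -
  obtain c where c: "\<forall>i\<in>{1..k}. (\<Sum>v\<in>{l i..m}. f v) / real_of_int (m - l i + 1) = c"
    using assms(7) by blast
  interpret winching_homomesy k m l \<nu> f c
    using winching_sweep.intro[OF assms(6)] winching_homomesy_axioms.intro[OF assms(1,3,4,5) c]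
    by (rule winching_homomesy.intro)
  show ?thesis
    unfolding homomesic_def by (intro exI[of _ "real k * c"] ballI orbit_average)
qed

end
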